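(* Let $V$ be a vector space over a field $F$ and $T\in OP(V)$. If $T$ has a vanishing polynomial, then there exists a unique monic polynomial $p_m\in F[x]$ of minimal degree among vanishing polynomials of $T$, and $p_m$ divides every vanishing polynomial of $T$.
   Context: $OP(V)$ is the set of all (not necessarily linear) maps $V\to V$, with pointwise addition and scalar multiplication, and composition as product; $T^0=I$ (identity), $T^{i}=T\circ T^{i-1}$. For $p(x)=\sum_{i=0}^m a_ix^i\in F[x]$, $p(T)$ is the map $v\mapsto\sum_{i=0}^m a_iT^i(v)$. A polynomial $p\in F[x]$ is a vanishing polynomial of $T$ if $p\neq0$ and $p(T)(v)=0$ for all $v\in V$. *)

theory Defs
  imports Main "HOL-Computational_Algebra.Polynomial"
begin

definition poly_op :: "('a::field \<Rightarrow> 'v::ab_group_add \<Rightarrow> 'v) \<Rightarrow> 'a poly \<Rightarrow> ('v \<Rightarrow> 'v) \<Rightarrow> 'v \<Rightarrow> 'v" where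
  "poly_op scale p T v = (\<Sum>i\<le>degree p. scale (coeff p i) ((T ^^ i) v))"

definition vanishing_poly :: "('a::field \<Rightarrow> 'v::ab_group_add \<Rightarrow> 'v) \<Rightarrow> ('v \<Rightarrow> 'v) \<Rightarrow> 'a poly \<Rightarrow> bool" where
  "vanishing_poly scale T p \<longleftrightarrow> p \<noteq> 0 \<and> (\<forall>v. poly_op scale p T v = 0)"

end

theory Submission
  imports Defs
begin

text \<open>The polynomials annihilating \<open>T\<close> form an ideal of \<open>F[x]\<close>, even though \<open>T\<close> need not be
  linear: only linearity in the polynomial is used, and \<open>(x * p)(T) v = p(T) (T v)\<close>.
  The vanishing polynomials are the nonzero elements of this ideal, so the monic element of
  least degree generates it by division with remainder, and is unique since two monic
  polynomials dividing each other coincide.\<close>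

definition annihilates :: "('a::field \<Rightarrow> 'v::ab_group_add \<Rightarrow> 'v) \<Rightarrow> ('v \<Rightarrow> 'v) \<Rightarrow> 'a poly \<Rightarrow> bool" where
  "annihilates scale T p \<longleftrightarrow> (\<forall>v. poly_op scale p T v = 0)"

lemma vanishing_poly_iff_annihilates:
  "vanishing_poly scale T p \<longleftrightarrow> p \<noteq> 0 \<and> annihilates scale T p"
  by (simp add: vanishing_poly_def annihilates_def)

context vector_space
begin

lemma poly_op_eq_sum_lessThan:
  assumes "degree p < n"
  shows "poly_op scale p T v = (\<Sum>i<n. scale (coeff p i) ((T ^^ i) v))"
proof -
  have "(\<Sum>i<n. scale (coeff p i) ((T ^^ i) v)) = (\<Sum>i\<le>degree p. scale (coeff p i) ((T ^^ i) v))"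
    by (rule sum.mono_neutral_right) (use assms in \<open>auto simp: coeff_eq_0\<close>)
  then show ?thesis by (simp add: poly_op_def)
qed

lemma poly_op_0 [simp]: "poly_op scale 0 T v = 0"
  by (simp add: poly_op_def)

lemma poly_op_add: "poly_op scale (p + q) T v = poly_op scale p T v + poly_op scale q T v"
proof -
  define n where "n = Suc (max (degree p) (degree q))"
  have "degree (p + q) < n" "degree p < n" "degree q < n"
    using degree_add_le_max[of p q] by (auto simp: n_def)
  then show ?thesis
    by (simp add: poly_op_eq_sum_lessThan scale_left_distrib sum.distrib)
qed

lemma poly_op_diff: "poly_op scale (p - q) T v = poly_op scale p T v - poly_op scale q T v"
  using poly_op_add[of "p - q" q] by (simp add: algebra_simps)

lemma poly_op_smult: "poly_op scale (smult c p) T v = scale c (poly_op scale p T v)"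
proof -
  have "degree (smult c p) < Suc (degree p)" "degree p < Suc (degree p)"
    using degree_smult_le[of c p] by simp_all
  then show ?thesis
    unfolding poly_op_eq_sum_lessThan[OF \<open>degree (smult c p) < _\<close>]
      poly_op_eq_sum_lessThan[OF \<open>degree p < _\<close>]
    by (simp add: scale_sum_right scale_right_distrib del: lessThan_Suc)
qed

lemma poly_op_pCons_0: "poly_op scale (pCons 0 p) T v = poly_op scale p T (T v)"
proof -
  have "degree (pCons 0 p) < Suc (Suc (degree p))" "degree p < Suc (degree p)"
    using degree_pCons_le[of 0 p] by simp_all
  then show ?thesis
    by (simp only: poly_op_eq_sum_lessThan sum.lessThan_Suc_shift coeff_pCons_0
        coeff_pCons_Suc scale_zero_left funpow_Suc_right o_apply add_0)
qed

lemma annihilates_diff: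
  "annihilates scale T p \<Longrightarrow> annihilates scale T q \<Longrightarrow> annihilates scale T (p - q)"
  by (simp add: annihilates_def poly_op_diff)

lemma annihilates_smult:
  "annihilates scale T p \<Longrightarrow> annihilates scale T (smult c p)"
  by (simp add: annihilates_def poly_op_smult)

lemma annihilates_mult_left:
  assumes "annihilates scale T p"
  shows "annihilates scale T (s * p)"
  unfolding annihilates_def
proof (induction s)
  case (pCons a s)
  with assms show ?case
    by (simp add: annihilates_def poly_op_add poly_op_smult poly_op_pCons_0)
qed simp

end

lemma ideal_min_degree_dvd:
  fixes A :: "'a::field poly \<Rightarrow> bool"
  assumes diff: "\<And>p q. A p \<Longrightarrow> A q \<Longrightarrow> A (p - q)"
    and mult: "\<And>s p. A p \<Longrightarrow> A (s * p)"
    and g: "A g" "g \<noteq> 0"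
    and min: "\<And>q. A q \<Longrightarrow> q \<noteq> 0 \<Longrightarrow> degree g \<le> degree q"
    and q: "A q"
  shows "g dvd q"
proof (rule ccontr)
  assume "\<not> g dvd q"
  then have rem: "q mod g \<noteq> 0"
    by (simp add: dvd_eq_mod_eq_0)
  have "A (q - q div g * g)"
    using diff mult q g by blast
  then have "A (q mod g)"
    by (simp add: minus_div_mult_eq_mod)
  then have "degree g \<le> degree (q mod g)"
    using min rem by blast
  with degree_mod_less'[OF \<open>g \<noteq> 0\<close> rem] show False
    by simp
qed

lemma monic_dvd_antisym:
  fixes p q :: "'a::field poly"
  assumes "lead_coeff p = 1" "lead_coeff q = 1" "p dvd q" "q dvd p"
  shows "p = q"
proof -
  obtain c where qc: "q = p * c"
    using assms(3) by blast
  have "p \<noteq> 0" "q \<noteq> 0"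
    using assms(1,2) by auto
  then have "degree q = degree p"
    using assms(3,4) by (simp add: dvd_imp_degree_le order_antisym)
  then have "degree c = 0"
    using \<open>p \<noteq> 0\<close> \<open>q \<noteq> 0\<close> qc by (simp add: degree_mult_eq)
  moreover have "lead_coeff c = 1"
    using assms(1,2) qc by (simp add: lead_coeff_mult)
  ultimately have "c = 1"
    by (metis degree_0_id one_pCons)
  with qc show ?thesis
    by simp
qed

lemma ex_monic_min_degree:
  fixes A :: "'a::field poly \<Rightarrow> bool"
  assumes smult: "\<And>c p. A p \<Longrightarrow> A (smult c p)"
    and nontrivial: "A p" "p \<noteq> 0"
  obtains g where "lead_coeff g = 1" "A g" "g \<noteq> 0"
    "\<And>q. A q \<Longrightarrow> q \<noteq> 0 \<Longrightarrow> degree g \<le> degree q"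
proof -
  obtain p0 where p0: "A p0" "p0 \<noteq> 0" and min: "\<And>q. A q \<Longrightarrow> q \<noteq> 0 \<Longrightarrow> degree p0 \<le> degree q"
    using ex_has_least_nat[of "\<lambda>q. A q \<and> q \<noteq> 0" p degree] nontrivial by blast
  define g where "g = smult (inverse (lead_coeff p0)) p0"
  have "A g"
    using smult[OF p0(1)] by (simp add: g_def)
  moreover have "lead_coeff g = 1" "g \<noteq> 0" "degree g = degree p0"
    using p0(2) by (simp_all add: g_def)
  ultimately show thesis
    using that[of g] min by simp
qed

theorem mainTheorem13:
  fixes scale :: "'a::field \<Rightarrow> 'v::ab_group_add \<Rightarrow> 'v" and T :: "'v \<Rightarrow> 'v"
  assumes "vector_space scale"
    and "\<exists>p. vanishing_poly scale T p"
  shows "\<exists>pm. (lead_coeff pm = 1 \<and> vanishing_poly scale T pm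
               \<and> (\<forall>q. vanishing_poly scale T q \<longrightarrow> degree pm \<le> degree q))
          \<and> (\<forall>r. (lead_coeff r = 1 \<and> vanishing_poly scale T r
               \<and> (\<forall>q. vanishing_poly scale T q \<longrightarrow> degree r \<le> degree q)) \<longrightarrow> r = pm)
          \<and> (\<forall>q. vanishing_poly scale T q \<longrightarrow> pm dvd q)"
proof -
  interpret vector_space scale by (fact assms(1))
  let ?A = "annihilates scale T"
  note ideal = annihilates_diff annihilates_mult_left
  obtain pm where pm: "lead_coeff pm = 1" "?A pm" "pm \<noteq> 0"
    and min: "\<And>q. ?A q \<Longrightarrow> q \<noteq> 0 \<Longrightarrow> degree pm \<le> degree q"
    using ex_monic_min_degree[of ?A] annihilates_smult assms(2)
    by (metis vanishing_poly_iff_annihilates)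
  have dvd: "pm dvd q" if "?A q" for q
    using ideal_min_degree_dvd[of ?A pm] ideal pm min that by blast
  show ?thesis
  proof (intro exI conjI allI impI)
    fix r
    assume r: "lead_coeff r = 1 \<and> vanishing_poly scale T r
               \<and> (\<forall>q. vanishing_poly scale T q \<longrightarrow> degree r \<le> degree q)"
    then have "r dvd pm"
      using ideal_min_degree_dvd[of ?A r pm] ideal pm by (auto simp: vanishing_poly_iff_annihilates)
    with r pm dvd show "r = pm"
      by (auto intro: monic_dvd_antisym simp: vanishing_poly_iff_annihilates)
  qed (use pm min dvd in \<open>auto simp: vanishing_poly_iff_annihilates\<close>)
qed

end
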